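(* Let $\mathcal M=(S,L,\tau,\ell)$ be an LMC (possibly with infinitely many states) and $s,t\in S$. Then $d(s,t)<1$ if and only if there is a policy $T$ with $\mathcal R^T_{\mathcal M}((s,t),S^2_1)<1$. In particular, if there is a policy $T$ with $\mathcal R^T_{\mathcal M}((s,t),S^2_0)>0$, then $d(s,t)<1$.
   Context: An LMC $\mathcal M=(S,L,\tau,\ell)$ has a nonempty countable state set $S$, finite label set $L$, finitely-branching transition function $\tau:S\to\mathrm{Distr}(S)$ and labelling $\ell$. The probabilistic bisimilarity distance $d$ is the least fixed point of $\Delta(e)(s,t)=1$ if $\ell(s)\ne\ell(t)$ and $\Delta(e)(s,t)=\min_{\omega\in\Omega(\tau(s),\tau(t))}\sum_{u,v}\omega(u,v)e(u,v)$ otherwise, where $\Omega(\mu,\nu)$ is the set of couplings (distributions on $S\times S$ with marginals $\mu,\nu$). Probabilistic bisimilarity $\sim$ is the largest equivalence $R$ on $S$ such that $(s,t)\in R$ implies $\ell(s)=\ell(t)$ and $\tau(s)(E)=\tau(t)(E)$ for every $R$-class $E$. Partition $S^2$ into $S^2_0=\{(s,t):s\sim t\}$, $S^2_1=\{(s,t):\ell(s)\ne\ell(t)\}$, $S^2_?=S^2\setminus(S^2_0\cup S^2_1)$. A policy is a map $T:S^2_?\to\mathrm{Distr}(S^2)$ with $T(s,t)\in\Omega(\tau(s),\tau(t))$. The Markov chain $\mathcal C^T_{\mathcal M}$ on $S^2$ has every pair in $S^2_0\cup S^2_1$ absorbing and from $(u,v)\in S^2_?$ moves to $(x,y)$ with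 probability $T(u,v)(x,y)$. $\mathcal R^T_{\mathcal M}((s,t),Z)$ is the probability that $\mathcal C^T_{\mathcal M}$ started in $(s,t)$ reaches $Z\subseteq S^2$. *)

theory Defs
  imports "HOL-Probability.Probability"
begin

definition lmc :: "'a set \<Rightarrow> 'l set \<Rightarrow> ('a \<Rightarrow> 'a pmf) \<Rightarrow> ('a \<Rightarrow> 'l) \<Rightarrow> bool" where
  "lmc S L \<tau> lab \<longleftrightarrow> S \<noteq> {} \<and> countable S \<and> finite L \<and> lab ` S \<subseteq> L \<and>
     (\<forall>s\<in>S. finite (set_pmf (\<tau> s)) \<and> set_pmf (\<tau> s) \<subseteq> S)"

definition couplings :: "'a pmf \<Rightarrow> 'a pmf \<Rightarrow> ('a \<times> 'a) pmf set" where
  "couplings \<mu> \<nu> = {\<omega>. map_pmf fst \<omega> = \<mu> \<and> map_pmf snd \<omega> = \<nu>}"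

definition dist_dom :: "'a set \<Rightarrow> ('a \<Rightarrow> 'a \<Rightarrow> real) set" where
  "dist_dom S = {e. \<forall>s t. (s \<in> S \<and> t \<in> S \<longrightarrow> 0 \<le> e s t \<and> e s t \<le> 1) \<and>
                          (\<not> (s \<in> S \<and> t \<in> S) \<longrightarrow> e s t = 0)}"

definition Delta :: "'a set \<Rightarrow> ('a \<Rightarrow> 'a pmf) \<Rightarrow> ('a \<Rightarrow> 'l)
                     \<Rightarrow> ('a \<Rightarrow> 'a \<Rightarrow> real) \<Rightarrow> ('a \<Rightarrow> 'a \<Rightarrow> real)" where
  "Delta S \<tau> lab e = (\<lambda>s t.
     if s \<in> S \<and> t \<in> S then
       (if lab s \<noteq> lab t then 1
        else (INF \<omega>\<in>couplings (\<tau> s) (\<tau> t). measure_pmf.expectation \<omega> (\<lambda>(u, v). e u v)))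
     else 0)"

definition bisim_dist :: "'a set \<Rightarrow> ('a \<Rightarrow> 'a pmf) \<Rightarrow> ('a \<Rightarrow> 'l) \<Rightarrow> ('a \<Rightarrow> 'a \<Rightarrow> real)" where
  "bisim_dist S \<tau> lab = (THE e. e \<in> dist_dom S \<and> Delta S \<tau> lab e = e \<and>
      (\<forall>e'\<in>dist_dom S. Delta S \<tau> lab e' = e' \<longrightarrow> e \<le> e'))"

definition prob_bisim_equiv :: "'a set \<Rightarrow> ('a \<Rightarrow> 'a pmf) \<Rightarrow> ('a \<Rightarrow> 'l) \<Rightarrow> ('a \<times> 'a) set \<Rightarrow> bool" where
  "prob_bisim_equiv S \<tau> lab R \<longleftrightarrow> equiv S R \<and>
     (\<forall>(s, t)\<in>R. lab s = lab t \<and>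
        (\<forall>E\<in>S // R. measure_pmf.prob (\<tau> s) E = measure_pmf.prob (\<tau> t) E))"

definition bisimilarity :: "'a set \<Rightarrow> ('a \<Rightarrow> 'a pmf) \<Rightarrow> ('a \<Rightarrow> 'l) \<Rightarrow> ('a \<times> 'a) set" where
  "bisimilarity S \<tau> lab = (THE R. prob_bisim_equiv S \<tau> lab R \<and>
      (\<forall>R'. prob_bisim_equiv S \<tau> lab R' \<longrightarrow> R' \<subseteq> R))"

definition S2_0 :: "'a set \<Rightarrow> ('a \<Rightarrow> 'a pmf) \<Rightarrow> ('a \<Rightarrow> 'l) \<Rightarrow> ('a \<times> 'a) set" where
  "S2_0 S \<tau> lab = bisimilarity S \<tau> lab"

definition S2_1 :: "'a set \<Rightarrow> ('a \<Rightarrow> 'l) \<Rightarrow> ('a \<times> 'a) set" where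
  "S2_1 S lab = {(s, t). s \<in> S \<and> t \<in> S \<and> lab s \<noteq> lab t}"

definition S2_q :: "'a set \<Rightarrow> ('a \<Rightarrow> 'a pmf) \<Rightarrow> ('a \<Rightarrow> 'l) \<Rightarrow> ('a \<times> 'a) set" where
  "S2_q S \<tau> lab = (S \<times> S) - (S2_0 S \<tau> lab \<union> S2_1 S lab)"

definition policy :: "'a set \<Rightarrow> ('a \<Rightarrow> 'a pmf) \<Rightarrow> ('a \<Rightarrow> 'l) \<Rightarrow> ('a \<times> 'a \<Rightarrow> ('a \<times> 'a) pmf) \<Rightarrow> bool" where
  "policy S \<tau> lab T \<longleftrightarrow> (\<forall>(s, t)\<in>S2_q S \<tau> lab. T (s, t) \<in> couplings (\<tau> s) (\<tau> t))"

definition chain_step :: "'a set \<Rightarrow> ('a \<Rightarrow> 'a pmf) \<Rightarrow> ('a \<Rightarrow> 'l) \<Rightarrow> ('a \<times> 'a \<Rightarrow> ('a \<times> 'a) pmf)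
                          \<Rightarrow> 'a \<times> 'a \<Rightarrow> ('a \<times> 'a) pmf" where
  "chain_step S \<tau> lab T x = (if x \<in> S2_q S \<tau> lab then T x else return_pmf x)"

fun reach_within :: "'a set \<Rightarrow> ('a \<Rightarrow> 'a pmf) \<Rightarrow> ('a \<Rightarrow> 'l) \<Rightarrow> ('a \<times> 'a \<Rightarrow> ('a \<times> 'a) pmf)
                     \<Rightarrow> ('a \<times> 'a) set \<Rightarrow> nat \<Rightarrow> 'a \<times> 'a \<Rightarrow> real" where
  "reach_within S \<tau> lab T Z 0 x = (if x \<in> Z then 1 else 0)"
| "reach_within S \<tau> lab T Z (Suc n) x =
     (if x \<in> Z then 1
      else measure_pmf.expectation (chain_step S \<tau> lab T x) (reach_within S \<tau> lab T Z n))"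

text \<open>Reachability probability R^T((s,t), Z): the probability of eventually reaching Z,
 i.e. the (monotone) limit of the probabilities of reaching Z within n steps.\<close>

definition reach_prob :: "'a set \<Rightarrow> ('a \<Rightarrow> 'a pmf) \<Rightarrow> ('a \<Rightarrow> 'l) \<Rightarrow> ('a \<times> 'a \<Rightarrow> ('a \<times> 'a) pmf)
                          \<Rightarrow> 'a \<times> 'a \<Rightarrow> ('a \<times> 'a) set \<Rightarrow> real" where
  "reach_prob S \<tau> lab T x Z = (SUP n. reach_within S \<tau> lab T Z n x)"

end

theory Submission
  imports Defs
begin

text \<open>Write \<open>d\<close> for the distance and \<open>R\<^sup>T(x)\<close> for the probability of reaching
  differently labelled pairs from \<open>x\<close> under the policy \<open>T\<close>. For every policy, \<open>R\<^sup>T\<close> is a prefixed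
  point of \<open>\<Delta>\<close>: on undecided pairs the coupling chosen by \<open>T\<close> witnesses this through the
  one-step equation of \<open>R\<^sup>T\<close>, and on bisimilar pairs a coupling supported on bisimilar pairs
  (where \<open>R\<^sup>T\<close> vanishes) does. Hence \<open>d \<le> R\<^sup>T\<close>. Conversely, since all supports are finite,
  the infimum in \<open>\<Delta> d = d\<close> is attained at every pair; the resulting optimal policy makes \<open>d\<close>
  harmonic, and induction on the step bound gives \<open>R\<^sup>T \<le> d\<close>. Finally bisimilar and
  differently labelled pairs are disjoint absorbing sets, so reaching the former with positive
  probability keeps the probability of reaching the latter below 1.\<close>

section \<open>Expectations and optimal couplings\<close>

lemma integrable_unit_interval:
  fixes f :: "'b \<Rightarrow> real"
  assumes "\<And>x. 0 \<le> f x \<and> f x \<le> 1"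
  shows "integrable (measure_pmf p) f"
  using assms by (intro measure_pmf.integrable_const_bound[where B=1]) auto

lemma expectation_unit_interval:
  fixes f :: "'b \<Rightarrow> real"
  assumes "\<And>x. 0 \<le> f x \<and> f x \<le> 1"
  shows "0 \<le> measure_pmf.expectation p f \<and> measure_pmf.expectation p f \<le> 1"
proof
  show "0 \<le> measure_pmf.expectation p f"
    using assms by (intro integral_nonneg_AE) auto
  show "measure_pmf.expectation p f \<le> 1"
    using assms by (intro measure_pmf.integral_le_const integrable_unit_interval) auto
qed

lemma expectation_mono_unit_interval:
  fixes f g :: "'b \<Rightarrow> real"
  assumes "\<And>x. 0 \<le> f x \<and> f x \<le> 1" "\<And>x. 0 \<le> g x \<and> g x \<le> 1"
    and "\<And>x. x \<in> set_pmf p \<Longrightarrow> f x \<le> g x"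
  shows "measure_pmf.expectation p f \<le> measure_pmf.expectation p g"
  using assms integrable_unit_interval[OF assms(1)] integrable_unit_interval[OF assms(2)]
  by (intro integral_mono_AE) (auto simp: AE_measure_pmf_iff)

lemma set_pmf_coupling_subset:
  "\<omega> \<in> couplings \<mu> \<nu> \<Longrightarrow> set_pmf \<omega> \<subseteq> set_pmf \<mu> \<times> set_pmf \<nu>"
  unfolding couplings_def by force

lemma pair_pmf_in_couplings: "pair_pmf \<mu> \<nu> \<in> couplings \<mu> \<nu>"
  unfolding couplings_def by (simp add: map_fst_pair_pmf map_snd_pair_pmf)

lemma subsequence_convergent_finite:
  fixes g :: "nat \<Rightarrow> 'b \<Rightarrow> real"
  assumes "finite P" "\<And>n p. \<bar>g n p\<bar> \<le> B"
  shows "\<exists>r. strict_mono r \<and> (\<forall>p\<in>P. convergent (\<lambda>n. g (r n) p))"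
  using assms(1)
proof induct
  case empty
  show ?case by (rule exI[of _ id]) (auto simp: strict_mono_def)
next
  case (insert p P)
  then obtain r where r: "strict_mono r" "\<forall>q\<in>P. convergent (\<lambda>n. g (r n) q)" by auto
  have "bounded (range (\<lambda>n. g (r n) p))"
    unfolding bounded_iff using assms(2) by auto
  then obtain l r' where r': "strict_mono r'" "((\<lambda>n. g (r n) p) \<circ> r') \<longlonglongrightarrow> l"
    using bounded_imp_convergent_subsequence by blast
  have "convergent (\<lambda>n. g (r (r' n)) q)" if "q \<in> insert p P" for q
  proof (cases "q = p")
    case True then show ?thesis using r'(2) by (auto simp: convergent_def o_def)
  next
    case False
    then have "convergent ((\<lambda>n. g (r n) q) \<circ> r')"
      using that r(2) r'(1) by (intro convergent_subseq_convergent) auto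
    then show ?thesis by (simp add: o_def)
  qed
  moreover have "strict_mono (\<lambda>n. r (r' n))" using r(1) r'(1) by (simp add: strict_mono_def)
  ultimately show ?case by blast
qed

lemma pmf_limit_finite_support:
  fixes w :: "nat \<Rightarrow> 'b pmf"
  assumes P: "finite P" and supp: "\<And>n. set_pmf (w n) \<subseteq> P"
    and lim: "\<And>p. p \<in> P \<Longrightarrow> (\<lambda>n. pmf (w n) p) \<longlonglongrightarrow> h p"
  shows "\<exists>\<omega>. \<forall>f :: 'b \<Rightarrow> real.
           (\<lambda>n. measure_pmf.expectation (w n) f) \<longlonglongrightarrow> measure_pmf.expectation \<omega> f"
proof -
  define h' where "h' p = (if p \<in> P then h p else 0)" for p
  have nonneg: "0 \<le> h' p" for p
    using lim by (auto simp: h'_def intro!: LIMSEQ_le_const[OF lim])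
  have "(\<lambda>n. \<Sum>p\<in>P. pmf (w n) p) \<longlonglongrightarrow> (\<Sum>p\<in>P. h' p)"
    using lim by (auto simp: h'_def intro!: tendsto_sum)
  moreover have "(\<Sum>p\<in>P. pmf (w n) p) = 1" for n
    using P supp by (intro sum_pmf_eq_1) auto
  ultimately have "(\<Sum>p\<in>P. h' p) = 1" by (simp add: LIMSEQ_const_iff)
  then have "(\<integral>\<^sup>+p. ennreal (h' p) \<partial>count_space UNIV) = 1"
    using P nonneg by (subst nn_integral_count_space') (auto simp: h'_def sum_ennreal)
  then have pmf_\<omega>: "pmf (embed_pmf h') p = h' p" for p
    using nonneg by (intro pmf_embed_pmf)
  have set_\<omega>: "set_pmf (embed_pmf h') \<subseteq> P"
    by (auto simp: set_pmf_eq pmf_\<omega> h'_def)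
  have expectation_sum: "measure_pmf.expectation q f = (\<Sum>p\<in>P. f p * pmf q p)"
    if "set_pmf q \<subseteq> P" for q and f :: "'b \<Rightarrow> real"
    using that P by (intro integral_measure_pmf_real) auto
  have "(\<lambda>n. \<Sum>p\<in>P. f p * pmf (w n) p) \<longlonglongrightarrow> (\<Sum>p\<in>P. f p * h' p)" for f :: "'b \<Rightarrow> real"
    using lim by (auto simp: h'_def intro!: tendsto_sum tendsto_mult)
  then show ?thesis
    using supp set_\<omega> by (intro exI[of _ "embed_pmf h'"] allI) (simp add: expectation_sum pmf_\<omega>)
qed

lemma map_pmf_eq_of_expectation_limit:
  assumes lim: "\<And>f :: 'b \<Rightarrow> real.
      (\<lambda>n. measure_pmf.expectation (w n) f) \<longlonglongrightarrow> measure_pmf.expectation \<omega> f"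
    and "\<And>n. map_pmf g (w n) = \<rho>"
  shows "map_pmf g \<omega> = \<rho>"
proof (rule pmf_eqI)
  fix a
  have "(\<lambda>n. pmf (map_pmf g (w n)) a) \<longlonglongrightarrow> pmf (map_pmf g \<omega>) a"
    using lim[of "indicator (g -` {a})"] by (simp add: pmf_map)
  then show "pmf (map_pmf g \<omega>) a = pmf \<rho> a"
    using assms(2) by (simp add: LIMSEQ_const_iff)
qed

text \<open>A minimising sequence of couplings converges pointwise along a subsequence, since all of
  them live on the finite set \<open>set_pmf \<mu> \<times> set_pmf \<nu>\<close>; the limit is again a coupling.\<close>

lemma couplings_attain_INF:
  fixes f :: "'b \<times> 'b \<Rightarrow> real"
  assumes "finite (set_pmf \<mu>)" "finite (set_pmf \<nu>)"
  shows "\<exists>\<omega>\<in>couplings \<mu> \<nu>. measure_pmf.expectation \<omega> f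
            = (INF \<omega>\<in>couplings \<mu> \<nu>. measure_pmf.expectation \<omega> f)"
proof -
  let ?C = "couplings \<mu> \<nu>" and ?E = "\<lambda>\<omega>. measure_pmf.expectation \<omega> f"
  define P where "P = set_pmf \<mu> \<times> set_pmf \<nu>"
  define I where "I = (INF \<omega>\<in>?C. ?E \<omega>)"
  have P: "finite P" "P \<noteq> {}" unfolding P_def using assms by (auto simp: set_pmf_not_empty)
  have supp: "set_pmf \<omega> \<subseteq> P" if "\<omega> \<in> ?C" for \<omega>
    using set_pmf_coupling_subset[OF that] by (simp add: P_def)
  have "Min (f ` P) \<le> ?E \<omega>" if "\<omega> \<in> ?C" for \<omega>
    using supp[OF that] P integrable_measure_pmf_finite[OF finite_subset[OF supp[OF that]]]
    by (intro measure_pmf.integral_ge_const) (auto simp: AE_measure_pmf_iff)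
  then have bdd: "bdd_below (?E ` ?C)" by (intro bdd_belowI) auto
  have "\<exists>\<omega>\<in>?C. ?E \<omega> < I + inverse (real (Suc n))" for n
    unfolding I_def using pair_pmf_in_couplings bdd
    by (subst cINF_less_iff[symmetric]) auto
  then obtain w where w: "\<And>n. w n \<in> ?C" "\<And>n. ?E (w n) < I + inverse (real (Suc n))"
    by metis
  obtain r where r: "strict_mono r" "\<forall>p\<in>P. convergent (\<lambda>n. pmf (w (r n)) p)"
    using subsequence_convergent_finite[OF P(1), of "\<lambda>n p. pmf (w n) p" 1] by (auto simp: pmf_le_1)
  obtain \<omega> where \<omega>: "\<And>g :: 'b \<times> 'b \<Rightarrow> real.
      (\<lambda>n. measure_pmf.expectation (w (r n)) g) \<longlonglongrightarrow> measure_pmf.expectation \<omega> g"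
    using pmf_limit_finite_support[OF P(1), of "w \<circ> r" "\<lambda>p. lim (\<lambda>n. pmf (w (r n)) p)"]
      supp w(1) r(2) by (auto simp: convergent_LIMSEQ_iff)
  have "\<omega> \<in> ?C"
    using w(1) by (auto simp: couplings_def intro!: map_pmf_eq_of_expectation_limit[OF \<omega>])
  moreover have "(\<lambda>n. ?E (w (r n))) \<longlonglongrightarrow> I"
  proof (rule tendsto_sandwich[where f="\<lambda>n. I" and h="(\<lambda>n. I + inverse (real (Suc n))) \<circ> r"])
    show "\<forall>\<^sub>F n in sequentially. I \<le> ?E (w (r n))"
      unfolding I_def using w(1) by (intro always_eventually allI cINF_lower[OF bdd])
    show "\<forall>\<^sub>F n in sequentially. ?E (w (r n)) \<le> ((\<lambda>n. I + inverse (real (Suc n))) \<circ> r) n"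
      using w(2) by (intro always_eventually allI less_imp_le) simp
    show "((\<lambda>n. I + inverse (real (Suc n))) \<circ> r) \<longlonglongrightarrow> I"
      by (rule LIMSEQ_subseq_LIMSEQ[OF LIMSEQ_inverse_real_of_nat_add r(1)])
  qed simp
  ultimately show ?thesis
    using \<omega>[of f] LIMSEQ_unique unfolding I_def by metis
qed

section \<open>The distance as the least prefixed point of \<open>\<Delta>\<close>\<close>

lemma dist_dom_unit_interval: "e \<in> dist_dom S \<Longrightarrow> 0 \<le> e s t \<and> e s t \<le> 1"
  unfolding dist_dom_def by (cases "s \<in> S \<and> t \<in> S") auto

lemma dist_dom_outside: "e \<in> dist_dom S \<Longrightarrow> \<not> (s \<in> S \<and> t \<in> S) \<Longrightarrow> e s t = 0"
  unfolding dist_dom_def by auto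

locale transition_system =
  fixes S :: "'a set" and \<tau> :: "'a \<Rightarrow> 'a pmf" and lab :: "'a \<Rightarrow> 'l"
begin

abbreviation "\<Delta> \<equiv> Delta S \<tau> lab"
abbreviation "d \<equiv> bisim_dist S \<tau> lab"

lemma bdd_below_expectation_couplings:
  assumes "e \<in> dist_dom S"
  shows "bdd_below ((\<lambda>\<omega>. measure_pmf.expectation \<omega> (\<lambda>(u, v). e u v)) ` couplings \<mu> \<nu>)"
  using dist_dom_unit_interval[OF assms]
  by (intro bdd_belowI[where m=0]) (auto intro!: integral_nonneg_AE split: prod.splits)

lemma Delta_dist_dom:
  assumes "e \<in> dist_dom S"
  shows "\<Delta> e \<in> dist_dom S"
proof -
  let ?E = "\<lambda>\<omega>. measure_pmf.expectation \<omega> (\<lambda>(u, v). e u v)"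
  have unit: "0 \<le> ?E \<omega> \<and> ?E \<omega> \<le> 1" for \<omega>
    using dist_dom_unit_interval[OF assms] by (intro expectation_unit_interval) (simp split: prod.splits)
  have "0 \<le> (INF \<omega>\<in>couplings \<mu> \<nu>. ?E \<omega>) \<and> (INF \<omega>\<in>couplings \<mu> \<nu>. ?E \<omega>) \<le> 1" for \<mu> \<nu>
  proof
    show "0 \<le> (INF \<omega>\<in>couplings \<mu> \<nu>. ?E \<omega>)"
      using pair_pmf_in_couplings unit by (intro cINF_greatest) auto
    have "(INF \<omega>\<in>couplings \<mu> \<nu>. ?E \<omega>) \<le> ?E (pair_pmf \<mu> \<nu>)"
      by (rule cINF_lower[OF bdd_below_expectation_couplings[OF assms] pair_pmf_in_couplings])
    then show "(INF \<omega>\<in>couplings \<mu> \<nu>. ?E \<omega>) \<le> 1" using unit order_trans by blast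
  qed
  then show ?thesis unfolding dist_dom_def Delta_def by auto
qed

lemma Delta_mono:
  assumes "e \<in> dist_dom S" "e' \<in> dist_dom S" "e \<le> e'"
  shows "\<Delta> e \<le> \<Delta> e'"
proof (intro le_funI)
  fix s t
  have "(INF \<omega>\<in>couplings (\<tau> s) (\<tau> t). measure_pmf.expectation \<omega> (\<lambda>(u, v). e u v))
     \<le> (INF \<omega>\<in>couplings (\<tau> s) (\<tau> t). measure_pmf.expectation \<omega> (\<lambda>(u, v). e' u v))"
  proof (rule cINF_mono)
    show "couplings (\<tau> s) (\<tau> t) \<noteq> {}" using pair_pmf_in_couplings by blast
    show "\<exists>\<omega>'\<in>couplings (\<tau> s) (\<tau> t). measure_pmf.expectation \<omega>' (\<lambda>(u, v). e u v)
            \<le> measure_pmf.expectation \<omega> (\<lambda>(u, v). e' u v)" if "\<omega> \<in> couplings (\<tau> s) (\<tau> t)" for \<omega>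
      using that dist_dom_unit_interval[OF assms(1)] dist_dom_unit_interval[OF assms(2)] assms(3)
      by (intro bexI[of _ \<omega>] expectation_mono_unit_interval) (auto simp: le_fun_def split: prod.splits)
  qed (rule bdd_below_expectation_couplings[OF assms(1)])
  then show "\<Delta> e s t \<le> \<Delta> e' s t" unfolding Delta_def by auto
qed

definition prefixed_dists :: "('a \<Rightarrow> 'a \<Rightarrow> real) set" where
  "prefixed_dists = {e \<in> dist_dom S. \<Delta> e \<le> e}"

definition least_prefixed :: "'a \<Rightarrow> 'a \<Rightarrow> real" where
  "least_prefixed = (\<lambda>s t. INF e\<in>prefixed_dists. e s t)"

lemma top_dist_prefixed: "(\<lambda>s t. if s \<in> S \<and> t \<in> S then 1 else 0) \<in> prefixed_dists"
proof -
  let ?top = "\<lambda>s t. if s \<in> S \<and> t \<in> S then 1 else 0 :: real"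
  have top: "?top \<in> dist_dom S" unfolding dist_dom_def by auto
  have "\<Delta> ?top s t \<le> ?top s t" for s t
    using dist_dom_unit_interval[OF Delta_dist_dom[OF top], of s t]
      dist_dom_outside[OF Delta_dist_dom[OF top], of s t] by auto
  with top
  show ?thesis unfolding prefixed_dists_def by (auto simp: le_fun_def)
qed

lemma least_prefixed_le: "e \<in> prefixed_dists \<Longrightarrow> least_prefixed \<le> e"
  unfolding least_prefixed_def le_fun_def prefixed_dists_def
  by (auto intro!: cINF_lower bdd_belowI[where m=0] dest: dist_dom_unit_interval)

lemma least_prefixed_dist_dom: "least_prefixed \<in> dist_dom S"
proof -
  have "0 \<le> least_prefixed s t" for s t
    unfolding least_prefixed_def using top_dist_prefixed
    by (intro cINF_greatest) (auto simp: prefixed_dists_def dest: dist_dom_unit_interval)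
  moreover have "least_prefixed s t \<le> (if s \<in> S \<and> t \<in> S then 1 else 0)" for s t
    using least_prefixed_le[OF top_dist_prefixed] by (auto simp: le_fun_def)
  ultimately show ?thesis unfolding dist_dom_def by (force intro: antisym split: if_splits)
qed

lemma Delta_least_prefixed: "\<Delta> least_prefixed = least_prefixed"
proof (rule antisym)
  show le: "\<Delta> least_prefixed \<le> least_prefixed"
  proof (intro le_funI)
    fix s t
    have "\<Delta> least_prefixed s t \<le> e s t" if "e \<in> prefixed_dists" for e
    proof -
      have "\<Delta> least_prefixed \<le> \<Delta> e"
        using that least_prefixed_dist_dom least_prefixed_le
        by (intro Delta_mono) (auto simp: prefixed_dists_def)
      also have "\<dots> \<le> e" using that by (auto simp: prefixed_dists_def)
      finally show ?thesis by (auto simp: le_fun_def)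
    qed
    then show "\<Delta> least_prefixed s t \<le> least_prefixed s t"
      unfolding least_prefixed_def using top_dist_prefixed by (intro cINF_greatest) auto
  qed
  have "\<Delta> least_prefixed \<in> prefixed_dists"
    using Delta_dist_dom[OF least_prefixed_dist_dom]
      Delta_mono[OF Delta_dist_dom[OF least_prefixed_dist_dom] least_prefixed_dist_dom le]
    by (auto simp: prefixed_dists_def)
  then show "least_prefixed \<le> \<Delta> least_prefixed" by (rule least_prefixed_le)
qed

lemma bisim_dist_eq_least_prefixed: "d = least_prefixed"
  unfolding bisim_dist_def
proof (rule the_equality)
  show "least_prefixed \<in> dist_dom S \<and> \<Delta> least_prefixed = least_prefixed \<and>
        (\<forall>e'\<in>dist_dom S. \<Delta> e' = e' \<longrightarrow> least_prefixed \<le> e')"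
    using least_prefixed_dist_dom Delta_least_prefixed least_prefixed_le
    by (auto simp: prefixed_dists_def)
  fix e assume "e \<in> dist_dom S \<and> \<Delta> e = e \<and> (\<forall>e'\<in>dist_dom S. \<Delta> e' = e' \<longrightarrow> e \<le> e')"
  then show "e = least_prefixed"
    using least_prefixed_dist_dom Delta_least_prefixed least_prefixed_le
    by (intro antisym) (auto simp: prefixed_dists_def)
qed

lemma bisim_dist_dist_dom: "d \<in> dist_dom S"
  using least_prefixed_dist_dom by (simp add: bisim_dist_eq_least_prefixed)

lemma Delta_bisim_dist: "\<Delta> d = d"
  using Delta_least_prefixed by (simp add: bisim_dist_eq_least_prefixed)

lemma bisim_dist_le_prefixed: "e \<in> dist_dom S \<Longrightarrow> \<Delta> e \<le> e \<Longrightarrow> d \<le> e"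
  using least_prefixed_le by (simp add: bisim_dist_eq_least_prefixed prefixed_dists_def)

end

section \<open>Reachability in the chain on pairs\<close>

context transition_system
begin

abbreviation "S2q \<equiv> S2_q S \<tau> lab"
abbreviation "rw T Z n x \<equiv> reach_within S \<tau> lab T Z n x"
abbreviation "rp T x Z \<equiv> reach_prob S \<tau> lab T x Z"

lemma reach_within_unit_interval: "0 \<le> rw T Z n x \<and> rw T Z n x \<le> 1"
proof (induction n arbitrary: x)
  case (Suc n)
  then show ?case using expectation_unit_interval[of "rw T Z n"] by auto
qed simp

lemma reach_within_Suc_mono: "rw T Z n x \<le> rw T Z (Suc n) x"
proof (induction n arbitrary: x)
  case 0
  then show ?case using reach_within_unit_interval[of T Z "Suc 0" x] by auto
next
  case (Suc n)
  then show ?case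
    by (auto intro!: expectation_mono_unit_interval reach_within_unit_interval)
qed

lemma reach_within_tendsto: "(\<lambda>n. rw T Z n x) \<longlonglongrightarrow> rp T x Z"
  unfolding reach_prob_def
proof (rule LIMSEQ_incseq_SUP)
  show "bdd_above (range (\<lambda>n. rw T Z n x))"
    using reach_within_unit_interval by (intro bdd_aboveI[where M=1]) blast
qed (intro incseq_SucI reach_within_Suc_mono)

lemma reach_prob_unit_interval: "0 \<le> rp T x Z \<and> rp T x Z \<le> 1"
  using reach_within_unit_interval[of T Z _ x]
  by (auto intro: LIMSEQ_le_const[OF reach_within_tendsto] LIMSEQ_le_const2[OF reach_within_tendsto])

lemma reach_within_absorbing: "x \<notin> S2q \<Longrightarrow> x \<notin> Z \<Longrightarrow> rw T Z n x = 0"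
  by (induction n) (auto simp: chain_step_def)

lemma reach_prob_absorbing: "x \<notin> S2q \<Longrightarrow> x \<notin> Z \<Longrightarrow> rp T x Z = 0"
  by (simp add: reach_prob_def reach_within_absorbing)

lemma reach_prob_target: "x \<in> Z \<Longrightarrow> rp T x Z = 1"
proof -
  assume "x \<in> Z"
  then have "rw T Z n x = 1" for n by (cases n) auto
  then show ?thesis by (simp add: reach_prob_def)
qed

lemma reach_prob_step:
  assumes "x \<in> S2q" "x \<notin> Z"
  shows "rp T x Z = measure_pmf.expectation (T x) (\<lambda>y. rp T y Z)"
proof -
  have "(\<lambda>n. rw T Z (Suc n) x) \<longlonglongrightarrow> rp T x Z"
    using reach_within_tendsto by (rule LIMSEQ_Suc)
  moreover have "(\<lambda>n. rw T Z (Suc n) x) \<longlonglongrightarrow> measure_pmf.expectation (T x) (\<lambda>y. rp T y Z)"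
    using assms reach_within_unit_interval
    by (auto simp: chain_step_def reach_within_tendsto
        intro!: integral_dominated_convergence[where w="\<lambda>_. 1"])
  ultimately show ?thesis by (rule LIMSEQ_unique)
qed

lemma reach_within_disjoint_le_1:
  assumes "Z1 \<inter> Z2 = {}" "Z1 \<inter> S2q = {}" "Z2 \<inter> S2q = {}"
  shows "rw T Z1 n x + rw T Z2 n x \<le> 1"
proof (induction n arbitrary: x)
  case 0
  then show ?case using assms by auto
next
  case (Suc n)
  consider "x \<in> Z1" | "x \<in> Z2" | "x \<notin> Z1" "x \<notin> Z2" by blast
  then show ?case
  proof cases
    case 1
    then have "rw T Z2 (Suc n) x = 0" using assms by (intro reach_within_absorbing) auto
    then show ?thesis using 1 by simp
  next
    case 2
    then have "rw T Z1 (Suc n) x = 0" using assms by (intro reach_within_absorbing) auto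
    then show ?thesis using 2 by simp
  next
    case 3
    let ?p = "chain_step S \<tau> lab T x"
    have "rw T Z1 (Suc n) x + rw T Z2 (Suc n) x
       = measure_pmf.expectation ?p (\<lambda>y. rw T Z1 n y + rw T Z2 n y)"
      using 3 by (simp add: Bochner_Integration.integral_add integrable_unit_interval reach_within_unit_interval)
    also have "\<dots> \<le> 1"
      using Suc reach_within_unit_interval
      by (intro expectation_unit_interval[THEN conjunct2]) (auto intro: add_nonneg_nonneg)
    finally show ?thesis .
  qed
qed

lemma reach_prob_disjoint_le_1:
  assumes "Z1 \<inter> Z2 = {}" "Z1 \<inter> S2q = {}" "Z2 \<inter> S2q = {}"
  shows "rp T x Z1 + rp T x Z2 \<le> 1"
  using reach_within_disjoint_le_1[OF assms]
  by (intro LIMSEQ_le_const2[OF tendsto_add[OF reach_within_tendsto reach_within_tendsto]]) blast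

end

section \<open>Probabilistic bisimilarity\<close>

locale LMC = transition_system S \<tau> lab
  for S :: "'a set" and \<tau> :: "'a \<Rightarrow> 'a pmf" and lab :: "'a \<Rightarrow> 'l" +
  fixes L :: "'l set"
  assumes lmc: "lmc S L \<tau> lab"
begin

abbreviation "PBE \<equiv> prob_bisim_equiv S \<tau> lab"
abbreviation "S20 \<equiv> S2_0 S \<tau> lab"
abbreviation "S21 \<equiv> S2_1 S lab"

lemma finite_set_pmf_trans: "s \<in> S \<Longrightarrow> finite (set_pmf (\<tau> s))"
  using lmc unfolding lmc_def by auto

lemma set_pmf_trans_subset: "s \<in> S \<Longrightarrow> set_pmf (\<tau> s) \<subseteq> S"
  using lmc unfolding lmc_def by auto

text \<open>An \<open>R\<close>-closed set is a union of \<open>R\<close>-classes, only finitely many of which meet the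
  finite supports of \<open>\<tau> x\<close> and \<open>\<tau> y\<close>.\<close>

lemma prob_bisim_equiv_closed_prob_eq:
  assumes R: "PBE R" and xy: "(x, y) \<in> R" and ES: "E \<subseteq> S"
    and closed: "\<And>a b. a \<in> E \<Longrightarrow> (a, b) \<in> R \<Longrightarrow> b \<in> E"
  shows "measure_pmf.prob (\<tau> x) E = measure_pmf.prob (\<tau> y) E"
proof -
  have eq: "equiv S R" and classes: "\<And>C. C \<in> S // R \<Longrightarrow> measure_pmf.prob (\<tau> x) C = measure_pmf.prob (\<tau> y) C"
    using R xy unfolding prob_bisim_equiv_def by blast+
  have xS: "x \<in> S" "y \<in> S" using xy eq by (auto simp: equiv_def refl_on_def)
  define F where "F = set_pmf (\<tau> x) \<union> set_pmf (\<tau> y)"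
  define Q where "Q = (\<lambda>z. R `` {z}) ` (E \<inter> F)"
  have finQ: "finite Q" unfolding Q_def F_def using finite_set_pmf_trans xS by auto
  have Q: "Q \<subseteq> S // R" unfolding Q_def using ES by (auto intro: quotientI)
  have EQ: "E \<inter> F = \<Union>Q \<inter> F"
    unfolding Q_def using closed eq ES by (auto simp: equiv_def refl_on_def)
  have disj: "disjoint_family_on id Q"
    unfolding disjoint_family_on_def using quotient_disj[OF eq] Q by (metis id_apply subsetD)
  have sum_classes: "measure_pmf.prob (\<tau> w) E = (\<Sum>C\<in>Q. measure_pmf.prob (\<tau> w) C)"
    if "set_pmf (\<tau> w) \<subseteq> F" for w
  proof -
    have "E \<inter> set_pmf (\<tau> w) = \<Union>(id ` Q) \<inter> set_pmf (\<tau> w)" using EQ that by auto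
    then have "measure_pmf.prob (\<tau> w) E = measure_pmf.prob (\<tau> w) (\<Union>(id ` Q))"
      by (metis measure_Int_set_pmf)
    also have "\<dots> = (\<Sum>C\<in>Q. measure_pmf.prob (\<tau> w) (id C))"
      by (rule measure_pmf.finite_measure_finite_Union[OF finQ _ disj]) auto
    finally show ?thesis by simp
  qed
  have "measure_pmf.prob (\<tau> x) E = (\<Sum>C\<in>Q. measure_pmf.prob (\<tau> x) C)"
    by (rule sum_classes) (auto simp: F_def)
  also have "\<dots> = (\<Sum>C\<in>Q. measure_pmf.prob (\<tau> y) C)"
    using classes Q by (intro sum.cong) auto
  also have "\<dots> = measure_pmf.prob (\<tau> y) E"
    by (rule sum_classes[symmetric]) (auto simp: F_def)
  finally show ?thesis .
qed

definition bisim_closure :: "('a \<times> 'a) set" where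
  "bisim_closure = (\<Union>{R. PBE R})\<^sup>+"

lemma equiv_bisim_closure: "equiv S bisim_closure"
proof -
  have refl: "PBE (Id_on S)"
    unfolding prob_bisim_equiv_def by (auto simp: equiv_def refl_on_def sym_def trans_def)
  have "\<Union>{R. PBE R} \<subseteq> S \<times> S"
    unfolding prob_bisim_equiv_def equiv_def refl_on_def by auto
  then have "bisim_closure \<subseteq> S \<times> S" unfolding bisim_closure_def by (rule trancl_subset_Sigma)
  moreover have "(x, x) \<in> bisim_closure" if "x \<in> S" for x
    using refl that unfolding bisim_closure_def by blast
  moreover have "sym (\<Union>{R. PBE R})"
    unfolding prob_bisim_equiv_def equiv_def sym_def by blast
  then have "sym bisim_closure" unfolding bisim_closure_def by (rule sym_trancl)
  moreover have "trans bisim_closure" unfolding bisim_closure_def by (rule trans_trancl)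
  ultimately show ?thesis unfolding equiv_def refl_on_def by blast
qed

lemma prob_bisim_equiv_subset_bisim_closure: "PBE R \<Longrightarrow> R \<subseteq> bisim_closure"
  unfolding bisim_closure_def by (intro order_trans[OF Union_upper trancl_incr]) simp

lemma prob_bisim_equiv_bisim_closure: "PBE bisim_closure"
proof -
  have closure_S: "bisim_closure \<subseteq> S \<times> S" and trans_closure: "trans bisim_closure"
    using equiv_bisim_closure unfolding equiv_def refl_on_def by auto
  have one_step: "lab a = lab b \<and>
      (\<forall>E\<in>S // bisim_closure. measure_pmf.prob (\<tau> a) E = measure_pmf.prob (\<tau> b) E)"
    if ab: "(a, b) \<in> R" and R: "PBE R" for a b R
  proof -
    have R_closure: "R \<subseteq> bisim_closure" using R by (rule prob_bisim_equiv_subset_bisim_closure)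
    have "measure_pmf.prob (\<tau> a) E = measure_pmf.prob (\<tau> b) E" if "E \<in> S // bisim_closure" for E
    proof -
      from \<open>E \<in> S // bisim_closure\<close> obtain c where E: "E = bisim_closure `` {c}"
        by (rule quotientE)
      show ?thesis
      proof (rule prob_bisim_equiv_closed_prob_eq[OF R ab])
        show "E \<subseteq> S" using closure_S unfolding E by blast
        show "b' \<in> E" if "a' \<in> E" "(a', b') \<in> R" for a' b'
          using that R_closure trans_closure unfolding E by (auto dest: transD)
      qed
    qed
    moreover have "lab a = lab b" using ab R unfolding prob_bisim_equiv_def by blast
    ultimately show ?thesis by blast
  qed
  have "lab s = lab t \<and>
      (\<forall>E\<in>S // bisim_closure. measure_pmf.prob (\<tau> s) E = measure_pmf.prob (\<tau> t) E)"
    if "(s, t) \<in> bisim_closure" for s t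
    using that[unfolded bisim_closure_def]
  proof (induction rule: trancl_induct)
    case (base y)
    then obtain R where "(s, y) \<in> R" "PBE R" by blast
    then show ?case by (rule one_step)
  next
    case (step y z)
    then obtain R where "(y, z) \<in> R" "PBE R" by blast
    then show ?case using one_step[of y z R] step.IH by simp
  qed
  with equiv_bisim_closure show ?thesis unfolding prob_bisim_equiv_def by blast
qed

lemma prob_bisim_equiv_bisimilarity: "PBE S20"
proof -
  have "bisimilarity S \<tau> lab = bisim_closure"
    unfolding bisimilarity_def
  proof (rule the_equality)
    show "PBE bisim_closure \<and> (\<forall>R'. PBE R' \<longrightarrow> R' \<subseteq> bisim_closure)"
      using prob_bisim_equiv_bisim_closure prob_bisim_equiv_subset_bisim_closure by blast
    show "R = bisim_closure" if "PBE R \<and> (\<forall>R'. PBE R' \<longrightarrow> R' \<subseteq> R)" for R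
      using that prob_bisim_equiv_bisim_closure prob_bisim_equiv_subset_bisim_closure
      by (intro antisym) blast+
  qed
  then show ?thesis using prob_bisim_equiv_bisim_closure by (simp add: S2_0_def)
qed

lemma S2_0_lab_eq: "(u, v) \<in> S20 \<Longrightarrow> lab u = lab v"
  using prob_bisim_equiv_bisimilarity unfolding prob_bisim_equiv_def by blast

lemma S2_0_S2_1_disjoint: "S20 \<inter> S21 = {}"
  using S2_0_lab_eq by (auto simp: S2_1_def)

lemma prob_bisim_equiv_coupling:
  assumes R: "PBE R" and uv: "(u, v) \<in> R"
  shows "\<exists>\<omega>\<in>couplings (\<tau> u) (\<tau> v). set_pmf \<omega> \<subseteq> R"
proof -
  have eq: "equiv S R" and classes: "\<And>s t C. (s, t) \<in> R \<Longrightarrow> C \<in> S // R \<Longrightarrow>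
      measure_pmf.prob (\<tau> s) C = measure_pmf.prob (\<tau> t) C"
    using R unfolding prob_bisim_equiv_def by blast+
  have RS: "R \<subseteq> S \<times> S" using eq by (auto simp: equiv_def refl_on_def)
  have reflR: "\<And>a. a \<in> S \<Longrightarrow> (a, a) \<in> R" using eq by (auto simp: equiv_def refl_on_def)
  have symR: "\<And>a b. (a, b) \<in> R \<Longrightarrow> (b, a) \<in> R" using eq by (auto simp: equiv_def sym_def)
  have transR: "\<And>a b c. (a, b) \<in> R \<Longrightarrow> (b, c) \<in> R \<Longrightarrow> (a, c) \<in> R"
    using eq by (auto simp: equiv_def trans_def)
  have matched: "\<exists>b\<in>set_pmf (\<tau> t). (a, b) \<in> R" if st: "(s, t) \<in> R" and a: "a \<in> set_pmf (\<tau> s)" for s t a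
  proof -
    have aS: "a \<in> S" using set_pmf_trans_subset a st RS by auto
    then have "measure_pmf.prob (\<tau> s) (R `` {a}) \<noteq> 0"
      using a reflR[OF aS] by (auto simp: measure_pmf_zero_iff)
    then have "measure_pmf.prob (\<tau> t) (R `` {a}) \<noteq> 0"
      using classes[OF st quotientI[OF aS]] by simp
    then show ?thesis by (auto simp: measure_pmf_zero_iff)
  qed
  have "rel_pmf (\<lambda>a b. (a, b) \<in> R) (\<tau> u) (\<tau> v)"
  proof (subst rel_pmf_iff_measure)
    show "symp (\<lambda>a b. (a, b) \<in> R)" "transp (\<lambda>a b. (a, b) \<in> R)"
      unfolding symp_def transp_def using symR transR by blast+
    have "rel_set (\<lambda>a b. (a, b) \<in> R) (set_pmf (\<tau> u)) (set_pmf (\<tau> v))"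
      unfolding rel_set_def using matched[OF uv] matched[OF symR[OF uv]] symR by blast
    moreover have "measure_pmf.prob (\<tau> u) {a. (a, y) \<in> R} = measure_pmf.prob (\<tau> v) {b. (x, b) \<in> R}"
      if "(x, y) \<in> R" for x y
    proof -
      have "{a. (a, y) \<in> R} = R `` {x}" "{b. (x, b) \<in> R} = R `` {x}"
        using that symR transR by blast+
      moreover have "x \<in> S" using that RS by auto
      ultimately show ?thesis using classes[OF uv quotientI[of x]] by simp
    qed
    ultimately show "rel_set (\<lambda>a b. (a, b) \<in> R) (set_pmf (\<tau> u)) (set_pmf (\<tau> v)) \<and>
      (\<forall>x\<in>set_pmf (\<tau> u). \<forall>y\<in>set_pmf (\<tau> v). (x, y) \<in> R \<longrightarrow>
          measure_pmf.prob (\<tau> u) {a. (a, y) \<in> R} = measure_pmf.prob (\<tau> v) {b. (x, b) \<in> R})"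
      by blast
  qed
  then obtain \<omega> where "\<And>x y. (x, y) \<in> set_pmf \<omega> \<Longrightarrow> (x, y) \<in> R"
    "map_pmf fst \<omega> = \<tau> u" "map_pmf snd \<omega> = \<tau> v"
    by (erule rel_pmf.cases)
  then show ?thesis unfolding couplings_def by auto
qed

section \<open>Policies and the distance\<close>

lemma exists_optimal_policy:
  "\<exists>T. policy S \<tau> lab T \<and>
     (\<forall>(u, v)\<in>S2q. measure_pmf.expectation (T (u, v)) (\<lambda>(a, b). d a b) = d u v)"
proof -
  have "\<exists>\<omega>\<in>couplings (\<tau> u) (\<tau> v). measure_pmf.expectation \<omega> (\<lambda>(a, b). d a b) = d u v"
    if "(u, v) \<in> S2q" for u v
  proof -
    have uv: "u \<in> S" "v \<in> S" "lab u = lab v" using that by (auto simp: S2_q_def S2_1_def)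
    have "d u v = \<Delta> d u v" using Delta_bisim_dist by simp
    then have "d u v = (INF \<omega>\<in>couplings (\<tau> u) (\<tau> v). measure_pmf.expectation \<omega> (\<lambda>(a, b). d a b))"
      using uv by (simp add: Delta_def)
    then show ?thesis using couplings_attain_INF finite_set_pmf_trans uv by metis
  qed
  then have "\<forall>x\<in>S2q. \<exists>\<omega>. \<omega> \<in> couplings (\<tau> (fst x)) (\<tau> (snd x)) \<and>
      measure_pmf.expectation \<omega> (\<lambda>(a, b). d a b) = d (fst x) (snd x)"
    by fastforce
  then obtain T where "\<forall>x\<in>S2q. T x \<in> couplings (\<tau> (fst x)) (\<tau> (snd x)) \<and>
      measure_pmf.expectation (T x) (\<lambda>(a, b). d a b) = d (fst x) (snd x)"
    by (metis bchoice)
  then have "policy S \<tau> lab T \<and>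
      (\<forall>(u, v)\<in>S2q. measure_pmf.expectation (T (u, v)) (\<lambda>(a, b). d a b) = d u v)"
    unfolding policy_def by auto
  then show ?thesis by blast
qed

lemma bisim_dist_S2_1: "(u, v) \<in> S21 \<Longrightarrow> d u v = 1"
  using fun_cong[OF fun_cong[OF Delta_bisim_dist, of u], of v] by (simp add: Delta_def S2_1_def)

lemma reach_within_le_bisim_dist:
  assumes "\<forall>(u, v)\<in>S2q. measure_pmf.expectation (T (u, v)) (\<lambda>(a, b). d a b) = d u v"
  shows "rw T S21 n (u, v) \<le> d u v"
proof (induction n arbitrary: u v)
  case 0
  show ?case using dist_dom_unit_interval[OF bisim_dist_dist_dom] bisim_dist_S2_1 by auto
next
  case (Suc n)
  have d_unit: "0 \<le> d a b \<and> d a b \<le> 1" for a b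
    by (rule dist_dom_unit_interval[OF bisim_dist_dist_dom])
  consider "(u, v) \<in> S21" | "(u, v) \<in> S2q" | "(u, v) \<notin> S21" "(u, v) \<notin> S2q" by blast
  then show ?case
  proof cases
    case 1
    then show ?thesis using bisim_dist_S2_1 by simp
  next
    case 2
    then have "rw T S21 (Suc n) (u, v) = measure_pmf.expectation (T (u, v)) (rw T S21 n)"
      by (simp add: chain_step_def S2_q_def)
    also have "\<dots> \<le> measure_pmf.expectation (T (u, v)) (\<lambda>(a, b). d a b)"
      using Suc.IH d_unit reach_within_unit_interval
      by (intro expectation_mono_unit_interval) (auto split: prod.splits)
    also have "\<dots> = d u v" using assms 2 by auto
    finally show ?thesis .
  next
    case 3
    then have "rw T S21 (Suc n) (u, v) = rw T S21 n (u, v)"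
      by (simp add: chain_step_def)
    then show ?thesis using Suc.IH by simp
  qed
qed

lemma exists_policy_reach_le_bisim_dist:
  "\<exists>T. policy S \<tau> lab T \<and> (\<forall>u v. rp T (u, v) S21 \<le> d u v)"
proof -
  obtain T where T: "policy S \<tau> lab T"
    "\<forall>(u, v)\<in>S2q. measure_pmf.expectation (T (u, v)) (\<lambda>(a, b). d a b) = d u v"
    using exists_optimal_policy by blast
  from T(2) have "rw T S21 n (u, v) \<le> d u v" for n u v
    by (rule reach_within_le_bisim_dist)
  then have "rp T (u, v) S21 \<le> d u v" for u v
    by (intro LIMSEQ_le_const2[OF reach_within_tendsto]) blast
  with T(1) show ?thesis by blast
qed

lemma Delta_le_expectation_coupling:
  assumes "e \<in> dist_dom S" "lab u = lab v" "\<omega> \<in> couplings (\<tau> u) (\<tau> v)"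
  shows "\<Delta> e u v \<le> measure_pmf.expectation \<omega> (\<lambda>(a, b). e a b)"
proof -
  have "0 \<le> measure_pmf.expectation \<omega> (\<lambda>(a, b). e a b)"
    using dist_dom_unit_interval[OF assms(1)] by (intro integral_nonneg_AE) (auto split: prod.splits)
  moreover have "(INF \<omega>\<in>couplings (\<tau> u) (\<tau> v). measure_pmf.expectation \<omega> (\<lambda>(a, b). e a b))
      \<le> measure_pmf.expectation \<omega> (\<lambda>(a, b). e a b)"
    by (rule cINF_lower[OF bdd_below_expectation_couplings[OF assms(1)] assms(3)])
  ultimately show ?thesis using assms(2) by (simp add: Delta_def)
qed

lemma reach_prob_dist_dom: "(\<lambda>u v. rp T (u, v) S21) \<in> dist_dom S"
  using reach_prob_unit_interval reach_prob_absorbing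
  by (auto simp: dist_dom_def S2_q_def S2_1_def)

lemma Delta_reach_prob_le:
  assumes T: "policy S \<tau> lab T"
  shows "\<Delta> (\<lambda>u v. rp T (u, v) S21) \<le> (\<lambda>u v. rp T (u, v) S21)"
proof (intro le_funI)
  fix u v
  let ?e = "\<lambda>u v. rp T (u, v) S21"
  have e_unit: "0 \<le> ?e a b \<and> ?e a b \<le> 1" for a b by (rule reach_prob_unit_interval)
  consider "\<not> (u \<in> S \<and> v \<in> S)" | "(u, v) \<in> S21" | "(u, v) \<in> S2q" | "(u, v) \<in> S20" "(u, v) \<notin> S21"
    unfolding S2_q_def by blast
  then show "\<Delta> ?e u v \<le> ?e u v"
  proof cases
    case 1
    then show ?thesis using e_unit by (auto simp: Delta_def)
  next
    case 2
    then show ?thesis by (simp add: Delta_def S2_1_def reach_prob_target)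
  next
    case 3
    then have "lab u = lab v" "T (u, v) \<in> couplings (\<tau> u) (\<tau> v)"
      using T by (auto simp: S2_q_def S2_1_def policy_def)
    then have "\<Delta> ?e u v \<le> measure_pmf.expectation (T (u, v)) (\<lambda>(a, b). ?e a b)"
      by (rule Delta_le_expectation_coupling[OF reach_prob_dist_dom])
    also have "\<dots> = ?e u v"
      using 3 by (simp add: reach_prob_step[of "(u, v)"] S2_q_def case_prod_beta')
    finally show ?thesis .
  next
    case 4
    have vanish: "?e a b = 0" if "(a, b) \<in> S20" for a b
      using that S2_0_S2_1_disjoint by (intro reach_prob_absorbing) (auto simp: S2_q_def)
    obtain \<omega> where \<omega>: "\<omega> \<in> couplings (\<tau> u) (\<tau> v)" "set_pmf \<omega> \<subseteq> S20"
      using prob_bisim_equiv_coupling[OF prob_bisim_equiv_bisimilarity 4(1)] by blast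
    from S2_0_lab_eq[OF 4(1)] have "\<Delta> ?e u v \<le> measure_pmf.expectation \<omega> (\<lambda>(a, b). ?e a b)"
      by (rule Delta_le_expectation_coupling[OF reach_prob_dist_dom _ \<omega>(1)])
    also have "\<dots> \<le> measure_pmf.expectation \<omega> (\<lambda>_. 0)"
      using \<omega>(2) vanish e_unit by (intro expectation_mono_unit_interval) (auto split: prod.splits)
    finally show ?thesis using vanish[OF 4(1)] by simp
  qed
qed

lemma bisim_dist_le_reach_prob: "policy S \<tau> lab T \<Longrightarrow> d u v \<le> rp T (u, v) S21"
  using bisim_dist_le_prefixed[OF reach_prob_dist_dom Delta_reach_prob_le] by (auto simp: le_fun_def)

lemma reach_prob_S2_0_S2_1_le_1: "rp T x S20 + rp T x S21 \<le> 1"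
  using S2_0_S2_1_disjoint by (intro reach_prob_disjoint_le_1) (auto simp: S2_q_def)

end

theorem mainTheorem10:
  fixes S :: "'a set" and L :: "'l set" and \<tau> :: "'a \<Rightarrow> 'a pmf" and lab :: "'a \<Rightarrow> 'l"
    and s t :: 'a
  assumes "lmc S L \<tau> lab" and "s \<in> S" and "t \<in> S"
  shows "(bisim_dist S \<tau> lab s t < 1 \<longleftrightarrow>
            (\<exists>T. policy S \<tau> lab T \<and> reach_prob S \<tau> lab T (s, t) (S2_1 S lab) < 1))
       \<and> ((\<exists>T. policy S \<tau> lab T \<and> reach_prob S \<tau> lab T (s, t) (S2_0 S \<tau> lab) > 0)
            \<longrightarrow> bisim_dist S \<tau> lab s t < 1)"
proof -
  interpret LMC S \<tau> lab L by (rule LMC.intro) (rule assms(1))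
  have "bisim_dist S \<tau> lab s t < 1 \<longleftrightarrow>
        (\<exists>T. policy S \<tau> lab T \<and> reach_prob S \<tau> lab T (s, t) (S2_1 S lab) < 1)"
    using exists_policy_reach_le_bisim_dist bisim_dist_le_reach_prob by (meson le_less_trans)
  moreover have "reach_prob S \<tau> lab T (s, t) (S2_1 S lab) < 1"
    if "reach_prob S \<tau> lab T (s, t) (S2_0 S \<tau> lab) > 0" for T
    using that reach_prob_S2_0_S2_1_le_1[of T "(s, t)"] by linarith
  ultimately show ?thesis by blast
qed

end
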